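(* Let $\mathcal M=(W,W_\bot,\preccurlyeq,\sqsubseteq,V)$ be a forest-like bi-intuitionistic model of finite height $n$, and let $\Sigma$ be a finite set of formulas with $\#\Sigma=s$. Then $\#(W/{\approx_\Sigma})\le 2^{2(n+1)s}_{n+2}$.
   Context: Formulas: $p\mid\bot\mid\varphi\wedge\psi\mid\varphi\vee\psi\mid\varphi\to\psi\mid\Diamond\varphi\mid\Box\varphi$ over a countably infinite set $\mathbb P$. A bi-intuitionistic model $(W,W_\bot,\preccurlyeq,\sqsubseteq,V)$: $\preccurlyeq,\sqsubseteq$ preorders on $W$, $W_\bot$ upward closed under both, $V:\mathbb P\to2^W$ with $V(p)$ $\preccurlyeq$-upward closed and $\supseteq W_\bot$. Satisfaction: $p$ iff $w\in V(p)$; $\bot$ iff $w\in W_\bot$; $\wedge,\vee$ pointwise; $w\models\varphi\to\psi$ iff for all $v\succcurlyeq w$, $v\models\varphi$ implies $v\models\psi$; $w\models\Diamond\varphi$ iff for all $u\succcurlyeq w$ there is $v\sqsupseteq u$ with $v\models\varphi$; $w\models\Box\varphi$ iff $v\models\varphi$ whenever $w\preccurlyeq u\sqsubseteq v$. $w\prec v$ means $w\preccurlyeq v$ and $v\not\preccurlyeq w$. The height of $w$ is the supremum of $n$ such that there is a chain $w=w_0\prec\cdots\prec w_n$; the height of $\mathcal M$ is the supremum of heights of its worlds. $\mathcal M$ is forest-like if for every $w$ the set $\{v:v\preccurlyeq w\}$ is totally ordered by $\preccurlyeq$. For $R\subseteq W\times W$: forward confluent if $w\preccurlyeq w'$, $wRv$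 imply some $v'$ with $v\preccurlyeq v'$, $w'Rv'$; backward confluent if $wRv\preccurlyeq v'$ implies some $w'$ with $w\preccurlyeq w'Rv'$; downward confluent if $w\preccurlyeq vRv'$ implies some $w'$ with $wRw'\preccurlyeq v'$. The $\Sigma$-label of $w$ is $\ell(w)=(\ell^+(w);\ell^\Diamond(w))$ with $\ell^+(w)=\{\varphi\in\Sigma:(\mathcal M,w)\models\varphi\}$, $\ell^\Diamond(w)=\{\varphi\in\Sigma:\forall v\sqsupseteq w,\ (\mathcal M,v)\not\models\varphi\}$. A $\Sigma$-bisimulation is a forward and backward confluent $Z\subseteq W\times W$ with $wZv\Rightarrow\ell(w)=\ell(v)$. A strong $\Sigma$-bisimulation is a $\Sigma$-bisimulation $Z$ such that both $Z$ and $Z^{-1}$ are downward confluent; $\approx_\Sigma$ is the greatest strong $\Sigma$-bisimulation (the union of all), an equivalence relation. Superexponential: $2^x_0=x$ and $2^x_{y+1}=2^{2^x_y}$. *)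

theory Defs
  imports Main "HOL-Library.Extended_Nat"
begin

datatype fm =
    Var nat
  | Bot
  | And fm fm
  | Or fm fm
  | Imp fm fm
  | Dia fm
  | Box fm

record 'w bimodel =
  W    :: "'w set"
  Wbot :: "'w set"
  leq  :: "('w \<times> 'w) set"
  sq   :: "('w \<times> 'w) set"
  V    :: "nat \<Rightarrow> 'w set"

definition is_bimodel :: "'w bimodel \<Rightarrow> bool" where
  "is_bimodel M \<longleftrightarrow>
     leq M \<subseteq> W M \<times> W M \<and> sq M \<subseteq> W M \<times> W M \<and>
     refl_on (W M) (leq M) \<and> trans (leq M) \<and>
     refl_on (W M) (sq M) \<and> trans (sq M) \<and>
     Wbot M \<subseteq> W M \<and>
     (\<forall>w v. w \<in> Wbot M \<and> (w, v) \<in> leq M \<longrightarrow> v \<in> Wbot M) \<and>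
     (\<forall>w v. w \<in> Wbot M \<and> (w, v) \<in> sq M \<longrightarrow> v \<in> Wbot M) \<and>
     (\<forall>p. V M p \<subseteq> W M \<and> Wbot M \<subseteq> V M p \<and>
          (\<forall>w v. w \<in> V M p \<and> (w, v) \<in> leq M \<longrightarrow> v \<in> V M p))"

fun sat :: "'w bimodel \<Rightarrow> 'w \<Rightarrow> fm \<Rightarrow> bool" where
  "sat M w (Var p) \<longleftrightarrow> w \<in> V M p"
| "sat M w Bot \<longleftrightarrow> w \<in> Wbot M"
| "sat M w (And a b) \<longleftrightarrow> sat M w a \<and> sat M w b"
| "sat M w (Or a b) \<longleftrightarrow> sat M w a \<or> sat M w b"
| "sat M w (Imp a b) \<longleftrightarrow> (\<forall>v. (w, v) \<in> leq M \<longrightarrow> sat M v a \<longrightarrow> sat M v b)"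
| "sat M w (Dia a) \<longleftrightarrow> (\<forall>u. (w, u) \<in> leq M \<longrightarrow> (\<exists>v. (u, v) \<in> sq M \<and> sat M v a))"
| "sat M w (Box a) \<longleftrightarrow> (\<forall>u v. (w, u) \<in> leq M \<longrightarrow> (u, v) \<in> sq M \<longrightarrow> sat M v a)"

definition strict :: "'w bimodel \<Rightarrow> 'w \<Rightarrow> 'w \<Rightarrow> bool" where
  "strict M w v \<longleftrightarrow> (w, v) \<in> leq M \<and> (v, w) \<notin> leq M"

definition has_chain :: "'w bimodel \<Rightarrow> 'w \<Rightarrow> nat \<Rightarrow> bool" where
  "has_chain M w k \<longleftrightarrow> (\<exists>f. f 0 = w \<and> (\<forall>i\<le>k. f i \<in> W M) \<and>
                                (\<forall>i<k. strict M (f i) (f (Suc i))))"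

definition world_height :: "'w bimodel \<Rightarrow> 'w \<Rightarrow> enat" where
  "world_height M w = Sup (enat ` {k. has_chain M w k})"

definition model_height :: "'w bimodel \<Rightarrow> enat" where
  "model_height M = Sup (world_height M ` W M)"

definition forest_like :: "'w bimodel \<Rightarrow> bool" where
  "forest_like M \<longleftrightarrow> (\<forall>w\<in>W M. \<forall>u\<in>W M. \<forall>v\<in>W M.
      (u, w) \<in> leq M \<and> (v, w) \<in> leq M \<longrightarrow> (u, v) \<in> leq M \<or> (v, u) \<in> leq M)"

definition label_pos :: "'w bimodel \<Rightarrow> fm set \<Rightarrow> 'w \<Rightarrow> fm set" where
  "label_pos M \<Sigma> w = {\<phi>\<in>\<Sigma>. sat M w \<phi>}"

definition label_dia :: "'w bimodel \<Rightarrow> fm set \<Rightarrow> 'w \<Rightarrow> fm set" where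
  "label_dia M \<Sigma> w = {\<phi>\<in>\<Sigma>. \<forall>v. (w, v) \<in> sq M \<longrightarrow> \<not> sat M v \<phi>}"

definition label :: "'w bimodel \<Rightarrow> fm set \<Rightarrow> 'w \<Rightarrow> fm set \<times> fm set" where
  "label M \<Sigma> w = (label_pos M \<Sigma> w, label_dia M \<Sigma> w)"

definition forward_confluent :: "'w bimodel \<Rightarrow> ('w \<times> 'w) set \<Rightarrow> bool" where
  "forward_confluent M R \<longleftrightarrow> (\<forall>w w' v. (w, w') \<in> leq M \<and> (w, v) \<in> R \<longrightarrow>
      (\<exists>v'. (v, v') \<in> leq M \<and> (w', v') \<in> R))"

definition backward_confluent :: "'w bimodel \<Rightarrow> ('w \<times> 'w) set \<Rightarrow> bool" where
  "backward_confluent M R \<longleftrightarrow> (\<forall>w v v'. (w, v) \<in> R \<and> (v, v') \<in> leq M \<longrightarrow>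
      (\<exists>w'. (w, w') \<in> leq M \<and> (w', v') \<in> R))"

definition downward_confluent :: "'w bimodel \<Rightarrow> ('w \<times> 'w) set \<Rightarrow> bool" where
  "downward_confluent M R \<longleftrightarrow> (\<forall>w v v'. (w, v) \<in> leq M \<and> (v, v') \<in> R \<longrightarrow>
      (\<exists>w'. (w, w') \<in> R \<and> (w', v') \<in> leq M))"

definition bisimulation :: "'w bimodel \<Rightarrow> fm set \<Rightarrow> ('w \<times> 'w) set \<Rightarrow> bool" where
  "bisimulation M \<Sigma> Z \<longleftrightarrow> Z \<subseteq> W M \<times> W M \<and>
     forward_confluent M Z \<and> backward_confluent M Z \<and>
     (\<forall>w v. (w, v) \<in> Z \<longrightarrow> label M \<Sigma> w = label M \<Sigma> v)"

definition strong_bisimulation :: "'w bimodel \<Rightarrow> fm set \<Rightarrow> ('w \<times> 'w) set \<Rightarrow> bool" where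
  "strong_bisimulation M \<Sigma> Z \<longleftrightarrow> bisimulation M \<Sigma> Z \<and>
     downward_confluent M Z \<and> downward_confluent M (Z\<inverse>)"

definition approx :: "'w bimodel \<Rightarrow> fm set \<Rightarrow> ('w \<times> 'w) set" where
  "approx M \<Sigma> = \<Union>{Z. strong_bisimulation M \<Sigma> Z}"

fun superexp :: "nat \<Rightarrow> nat \<Rightarrow> nat" where
  "superexp x 0 = x"
| "superexp x (Suc y) = 2 ^ superexp x y"

end

(*
  Call two worlds up-equivalent when the trees of clusters above them agree up to labels, and
  updown-equivalent when moreover the chains of clusters below them (chains, because the model is
  forest-like) agree as well.  Updown-equivalence restricted to equally labelled worlds is a strong
  Sigma-bisimulation, so it refines the greatest one, and it suffices to count its classes.

  With p <= 3^s the number of possible labels, the up-class of a world of height k + 1 is determined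
  by the set of labels of its cluster and the set of up-classes of its covers, which have height
  at most k; so the number u_k of up-classes of worlds of height < k satisfies
  u_(k+1) <= 2^p * 2^(u_k).  The updown-class of a world is determined by its up-class and the
  updown-class of the cluster covered by it, so the numbers d_k of updown-classes of worlds of
  depth < k satisfy d_(k+1) <= u_(n+1) * (d_k + 1).  Finally a world's own label, the other labels of
  its cluster, its successors' up-classes and its predecessor's updown-class determine its class,
  and p * 2^(p-1) * 2^(u_n) * (d_n + 1) is dominated by the stated tower of exponentials.
*)
theory Submission
  imports Defs "HOL-Library.FuncSet"
begin

section \<open>Cardinality of images and of sets of subsets\<close>

lemma card_image_le_if_factors_through:
  assumes "finite (h ` A)" and "\<forall>x\<in>A. \<forall>y\<in>A. h x = h y \<longrightarrow> f x = f y"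
  shows "finite (f ` A)" and "card (f ` A) \<le> card (h ` A)"
proof -
  have "f ` A = (f \<circ> inv_into A h) ` h ` A"
    unfolding image_comp
  proof (rule image_cong[OF refl])
    fix x assume "x \<in> A"
    then show "f x = (f \<circ> inv_into A h \<circ> h) x"
      using assms(2) inv_into_into f_inv_into_f by (metis comp_apply image_eqI)
  qed
  then show "finite (f ` A)" "card (f ` A) \<le> card (h ` A)"
    using assms(1) card_image_le by auto
qed

lemma card_disjoint_subset_pairs_le:
  assumes "finite S"
  shows "card {(A, B). A \<subseteq> S \<and> B \<subseteq> S \<and> A \<inter> B = {}} \<le> 3 ^ card S"
proof -
  define code where
    "code = (\<lambda>(A, B). restrict (\<lambda>x. if x \<in> A then 0 else if x \<in> B then 1 else 2::nat) S)"
  let ?Q = "{(A, B). A \<subseteq> S \<and> B \<subseteq> S \<and> A \<inter> B = {}}"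
  have "inj_on code ?Q"
    by (rule inj_on_inverseI[where g = "\<lambda>f. ({x\<in>S. f x = 0}, {x\<in>S. f x = 1})"])
       (auto simp: code_def split: if_splits)
  moreover have "code ` ?Q \<subseteq> S \<rightarrow>\<^sub>E {0, 1, 2}"
    by (auto simp: code_def split: if_splits)
  ultimately have "card ?Q \<le> card (S \<rightarrow>\<^sub>E {0, 1, 2::nat})"
    using assms by (intro card_inj_on_le) (auto simp: finite_PiE)
  also have "\<dots> = 3 ^ card S"
    using assms by (simp add: card_PiE numeral_3_eq_3)
  finally show ?thesis .
qed

lemma card_insert_empty_singletons_le:
  "finite D \<Longrightarrow> card (insert {} ((\<lambda>c. {c}) ` D)) \<le> card D + 1"
  by (simp add: card_insert_if card_image_le le_SucI)

lemma card_Sigma_Pow_remove: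
  "finite A \<Longrightarrow> card (SIGMA a:A. Pow (A - {a})) = card A * 2 ^ (card A - 1)"
  by (simp add: card_SigmaI card_Pow card_Diff_singleton)

section \<open>Strong bisimulations and the quotient by the greatest one\<close>

lemma forward_confluent_relcomp:
  "forward_confluent M Z1 \<Longrightarrow> forward_confluent M Z2 \<Longrightarrow> forward_confluent M (Z1 O Z2)"
  unfolding forward_confluent_def by blast

lemma backward_confluent_relcomp:
  "backward_confluent M Z1 \<Longrightarrow> backward_confluent M Z2 \<Longrightarrow> backward_confluent M (Z1 O Z2)"
  unfolding backward_confluent_def by blast

lemma downward_confluent_relcomp:
  "downward_confluent M Z1 \<Longrightarrow> downward_confluent M Z2 \<Longrightarrow> downward_confluent M (Z1 O Z2)"
  unfolding downward_confluent_def by blast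

lemma strong_bisimulation_converse:
  "strong_bisimulation M \<Sigma> Z \<Longrightarrow> strong_bisimulation M \<Sigma> (Z\<inverse>)"
  unfolding strong_bisimulation_def bisimulation_def forward_confluent_def backward_confluent_def
  by auto

lemma strong_bisimulation_relcomp:
  assumes "strong_bisimulation M \<Sigma> Z1" and "strong_bisimulation M \<Sigma> Z2"
  shows "strong_bisimulation M \<Sigma> (Z1 O Z2)"
  using assms forward_confluent_relcomp backward_confluent_relcomp downward_confluent_relcomp
    downward_confluent_relcomp[of M "Z2\<inverse>" "Z1\<inverse>"]
  unfolding strong_bisimulation_def bisimulation_def by (auto simp: converse_relcomp)

lemma relcomp_approx_subset:
  "strong_bisimulation M \<Sigma> Z \<Longrightarrow> Z O approx M \<Sigma> \<subseteq> approx M \<Sigma>"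
  unfolding approx_def using strong_bisimulation_relcomp by blast

lemma strong_bisimulation_Image_approx_eq:
  assumes "strong_bisimulation M \<Sigma> Z" and "(x, y) \<in> Z"
  shows "approx M \<Sigma> `` {x} = approx M \<Sigma> `` {y}"
  using assms relcomp_approx_subset[OF assms(1)]
    relcomp_approx_subset[OF strong_bisimulation_converse[OF assms(1)]]
  by blast

lemma card_quotient_approx_le:
  assumes "strong_bisimulation M \<Sigma> Z" and "finite (f ` W M)"
    and "\<forall>x\<in>W M. \<forall>y\<in>W M. f x = f y \<longrightarrow> (x, y) \<in> Z"
  shows "finite (W M // approx M \<Sigma>)" and "card (W M // approx M \<Sigma>) \<le> card (f ` W M)"
proof -
  have classes: "W M // approx M \<Sigma> = (\<lambda>x. approx M \<Sigma> `` {x}) ` W M"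
    unfolding quotient_def by blast
  have "\<forall>x\<in>W M. \<forall>y\<in>W M. f x = f y \<longrightarrow> approx M \<Sigma> `` {x} = approx M \<Sigma> `` {y}"
    using strong_bisimulation_Image_approx_eq[OF assms(1)] assms(3) by blast
  from card_image_le_if_factors_through[OF assms(2) this]
  show "finite (W M // approx M \<Sigma>)" "card (W M // approx M \<Sigma>) \<le> card (f ` W M)"
    unfolding classes by blast+
qed

lemma strong_bisimulation_Times_if_no_formulas:
  assumes "is_bimodel M"
  shows "strong_bisimulation M {} (W M \<times> W M)"
proof -
  have "(x, y) \<in> leq M \<Longrightarrow> x \<in> W M \<and> y \<in> W M" "x \<in> W M \<Longrightarrow> (x, x) \<in> leq M" for x y
    using assms unfolding is_bimodel_def refl_on_def by blast+
  then show ?thesis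
    unfolding strong_bisimulation_def bisimulation_def forward_confluent_def
      backward_confluent_def downward_confluent_def
    by (auto simp: label_def label_pos_def label_dia_def)
qed

lemma card_quotient_approx_no_formulas:
  assumes "is_bimodel M"
  shows "finite (W M // approx M {})" and "card (W M // approx M {}) \<le> 1"
proof -
  have "finite ((\<lambda>x. ()) ` W M)" "\<forall>x\<in>W M. \<forall>y\<in>W M. () = () \<longrightarrow> (x, y) \<in> W M \<times> W M"
    by auto
  note quotient = card_quotient_approx_le[OF strong_bisimulation_Times_if_no_formulas[OF assms] this]
  show "finite (W M // approx M {})"
    by (rule quotient(1))
  show "card (W M // approx M {}) \<le> 1"
    using quotient(2) card_mono[of "UNIV :: unit set" "(\<lambda>x. ()) ` W M"] by simp
qed

section \<open>Superexponential arithmetic\<close>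

lemma le_superexp: "x \<le> superexp x j"
  by (induction j) (simp_all add: le_trans[OF _ less_imp_le[OF less_exp]])

lemma superexp_mono:
  assumes "x \<le> y" and "j \<le> j'"
  shows "superexp x j \<le> superexp y j'"
proof -
  have "superexp x j \<le> superexp y j"
    using assms(1) by (induction j) (simp_all add: power_increasing)
  also have "\<dots> \<le> superexp y j'"
    using lift_Suc_mono_le[of "superexp y", OF _ assms(2)] by (simp add: less_imp_le[OF less_exp])
  finally show ?thesis .
qed

lemma double_superexp_le: "2 * superexp x (Suc j) \<le> superexp (Suc x) (Suc j)"
proof (induction j)
  case (Suc j)
  have "2 * superexp x (Suc (Suc j)) = 2 ^ (superexp x (Suc j) + 1)"
    by simp
  also have "\<dots> \<le> 2 ^ (2 * superexp x (Suc j))"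
    by (intro power_increasing) simp_all
  also have "\<dots> \<le> 2 ^ superexp (Suc x) (Suc j)"
    using Suc.IH by (intro power_increasing) simp_all
  finally show ?case
    by simp
qed simp

lemma superexp_power_superexp_le:
  "superexp x (j + 3) ^ superexp x (j + 2) \<le> superexp (Suc x) (j + 3)"
proof -
  let ?A = "superexp x (j + 2)"
  have "superexp x (j + 3) ^ ?A = 2 ^ (?A * ?A)"
    by (simp add: numeral_3_eq_3 power_mult)
  also have "?A * ?A = 2 ^ (2 * superexp x (Suc j))"
    by (simp add: numeral_2_eq_2 mult_2 power_add)
  also have "(2::nat) ^ 2 ^ (2 * superexp x (Suc j)) \<le> 2 ^ 2 ^ superexp (Suc x) (Suc j)"
    using double_superexp_le[of x j] by (intro power_increasing) simp_all
  finally show ?thesis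
    by (simp add: numeral_3_eq_3)
qed

lemma le_two_power_pred: "n \<le> 2 ^ (n - 1)"
proof (induction n)
  case (Suc n)
  then show ?case
    by (cases n) simp_all
qed simp

lemma two_mul_three_power_le: "2 * 3 ^ s \<le> 4 ^ s + (2::nat)"
proof (induction s)
  case (Suc s)
  show ?case
  proof (cases s)
    case (Suc s')
    then have "4 \<le> (4::nat) ^ s"
      by simp
    then show ?thesis
      using Suc.IH by simp
  qed simp
qed simp

lemma mul_two_power_pred_le_superexp:
  assumes "p \<le> 3 ^ s"
  shows "p * 2 ^ (p - 1) \<le> superexp (2 * s) 2"
proof -
  let ?t = "(3::nat) ^ s"
  have "p * 2 ^ (p - 1) \<le> ?t * 2 ^ (?t - 1)"
    using assms by (intro mult_le_mono power_increasing) simp_all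
  also have "\<dots> \<le> 2 ^ (?t - 1) * 2 ^ (?t - 1)"
    using le_two_power_pred[of ?t] by simp
  also have "\<dots> = 2 ^ (2 * ?t - 2)"
    by (simp add: power_add[symmetric])
  also have "\<dots> \<le> 2 ^ 4 ^ s"
    using two_mul_three_power_le[of s] by (intro power_increasing) simp_all
  also have "\<dots> = superexp (2 * s) 2"
  proof -
    have "(4::nat) ^ s = 2 ^ (2 * s)"
      by (simp add: power_mult)
    then show ?thesis
      by (simp add: numeral_2_eq_2)
  qed
  finally show ?thesis .
qed

lemma iterated_exp_le_superexp:
  fixes u :: "nat \<Rightarrow> nat"
  assumes "p \<le> 2 ^ x" and "u 0 = 0" and "\<And>k. u (Suc k) \<le> 2 ^ p * 2 ^ u k"
  shows "u (Suc k) \<le> superexp (x + k) (k + 2)"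
proof (induction k)
  case 0
  have "u (Suc 0) \<le> 2 ^ p"
    using assms(2) assms(3)[of 0] by simp
  also have "\<dots> \<le> 2 ^ 2 ^ x"
    using assms(1) by (intro power_increasing) simp_all
  finally show ?case
    by (simp add: numeral_2_eq_2)
next
  case (Suc k)
  have "p \<le> superexp x 1"
    using assms(1) by simp
  also have "\<dots> \<le> superexp (x + k) (k + 2)"
    by (rule superexp_mono) simp_all
  finally have "p + u (Suc k) \<le> 2 * superexp (x + k) (Suc (k + 1))"
    using Suc.IH by simp
  also have "\<dots> \<le> superexp (x + Suc k) (k + 2)"
    using double_superexp_le[of "x + k" "Suc k"] by simp
  finally have "(2::nat) ^ (p + u (Suc k)) \<le> 2 ^ superexp (x + Suc k) (k + 2)"
    by (intro power_increasing) simp_all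
  then show ?case
    using assms(3)[of "Suc k"] by (simp add: power_add)
qed

lemma linear_recurrence_le_power:
  fixes d :: "nat \<Rightarrow> nat"
  assumes "d 0 = 0" and "\<And>k. d (Suc k) \<le> X * (d k + 1)"
  shows "d k + 1 \<le> (X + 1) ^ k"
proof (induction k)
  case (Suc k)
  have "d (Suc k) + 1 \<le> X * (X + 1) ^ k + (X + 1) ^ k"
    using assms(2)[of k] mult_le_mono2[OF Suc.IH, of X] Suc.IH by linarith
  then show ?case
    by (simp add: algebra_simps)
qed (simp add: assms(1))

lemma square_mul_power_Suc_le:
  fixes X n :: nat
  assumes "2 \<le> X"
  shows "X * X * (X + 1) ^ n \<le> X ^ (2 * n + 4)"
proof -
  have "X * X * (X + 1) ^ n \<le> (X + 1) * (X + 1) * (X + 1) ^ n"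
    by (intro mult_le_mono) simp_all
  also have "\<dots> = (X + 1) ^ (n + 2)"
    by (simp add: algebra_simps)
  also have "\<dots> \<le> (X * X) ^ (n + 2)"
  proof -
    have "X + 1 \<le> X * X"
      using assms mult_le_mono1[OF assms, of X] by linarith
    then show ?thesis
      by (rule power_mono) simp
  qed
  also have "\<dots> = X ^ (2 * (n + 2))"
    by (simp only: power2_eq_square[symmetric] power_mult)
  also have "2 * (n + 2) = 2 * n + 4"
    by simp
  finally show ?thesis .
qed

text \<open>In the application, \<open>p\<close> is the number of labels, and \<open>u k\<close> and \<open>d k\<close> count the
  up-classes of height \<open>< k\<close> and the updown-classes of depth \<open>< k\<close>.\<close>

lemma count_le_superexp:
  fixes p s n :: nat and u d :: "nat \<Rightarrow> nat"
  assumes "1 \<le> s" and "p \<le> 3 ^ s"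
    and "u 0 = 0" and "\<And>k. u (Suc k) \<le> 2 ^ p * 2 ^ u k"
    and "d 0 = 0" and "\<And>k. d (Suc k) \<le> u (Suc n) * (d k + 1)"
  shows "p * 2 ^ (p - 1) * 2 ^ u n * (d n + 1) \<le> superexp (2 * (n + 1) * s) (n + 2)"
proof (cases n)
  case 0
  then show ?thesis
    using mul_two_power_pred_le_superexp[OF assms(2)] assms(3,5) by (simp del: superexp.simps add: numeral_2_eq_2)
next
  case (Suc m)
  define X where "X = superexp (2 * s + n) (n + 2)"
  have "p \<le> 2 ^ (2 * s)"
    using assms(2) power_mono[of "3::nat" 4 s] by (simp add: power_mult)
  then have u_le: "u (Suc k) \<le> superexp (2 * s + k) (k + 2)" for k
    using iterated_exp_le_superexp assms(3,4) by blast
  have "2 \<le> X"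
    unfolding X_def using le_superexp[of "2 * s + n" "n + 2"] assms(1) by simp
  have "p * 2 ^ (p - 1) \<le> X"
    using mul_two_power_pred_le_superexp[OF assms(2)] superexp_mono[of "2 * s" _ 2 "n + 2"]
    unfolding X_def by (meson le_add1 le_add2 le_trans)
  moreover have "2 ^ u n \<le> X"
  proof -
    have "(2::nat) ^ u n \<le> 2 ^ superexp (2 * s + m) (m + 2)"
      using u_le[of m] Suc by (intro power_increasing) simp_all
    also have "\<dots> \<le> X"
      using superexp_mono[of "2 * s + m" "2 * s + n" "m + 3" "n + 2"] Suc
      unfolding X_def by (simp add: numeral_3_eq_3)
    finally show ?thesis .
  qed
  moreover have "d n + 1 \<le> (X + 1) ^ n"
    using linear_recurrence_le_power[of d X] assms(5,6) u_le[of n]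
      mult_le_mono1[of "u (Suc n)" X] unfolding X_def by (meson le_trans)
  ultimately have "p * 2 ^ (p - 1) * 2 ^ u n * (d n + 1) \<le> X ^ (2 * n + 4)"
    using square_mul_power_Suc_le[OF \<open>2 \<le> X\<close>, of n] mult_le_mono le_trans by meson
  also have "\<dots> \<le> X ^ superexp (2 * s + n) (m + 2)"
  proof -
    have "2 * n + 4 \<le> 4 * 2 ^ n"
      using less_exp[of n] by linarith
    also have "\<dots> = 2 ^ (n + 2)"
      by simp
    also have "\<dots> \<le> superexp (2 * s + n) (m + 2)"
      using superexp_mono[of "n + 2" "2 * s + n" 1 "m + 2"] assms(1) by simp
    finally show ?thesis
      using \<open>2 \<le> X\<close> by (intro power_increasing) simp_all
  qed
  also have "\<dots> \<le> superexp (Suc (2 * s + n)) (n + 2)"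
    using superexp_power_superexp_le[of "2 * s + n" m] Suc unfolding X_def
    by (simp add: numeral_3_eq_3)
  also have "\<dots> \<le> superexp (2 * (n + 1) * s) (n + 2)"
  proof (rule superexp_mono)
    have "n + 1 \<le> 2 * n * s"
      using Suc mult_le_mono2[OF assms(1), of "2 * n"] by simp
    then show "Suc (2 * s + n) \<le> 2 * (n + 1) * s"
      by (simp add: algebra_simps)
  qed simp
  finally show ?thesis .
qed

section \<open>Clusters, covers and heights\<close>

definition same_cluster :: "'w bimodel \<Rightarrow> 'w \<Rightarrow> 'w \<Rightarrow> bool" where
  "same_cluster M x y \<longleftrightarrow> (x, y) \<in> leq M \<and> (y, x) \<in> leq M"

definition covered_by :: "'w bimodel \<Rightarrow> 'w \<Rightarrow> 'w \<Rightarrow> bool" where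
  "covered_by M x z \<longleftrightarrow> strict M x z \<and> \<not> (\<exists>u. strict M x u \<and> strict M u z)"

definition cluster_labels :: "'w bimodel \<Rightarrow> fm set \<Rightarrow> 'w \<Rightarrow> (fm set \<times> fm set) set" where
  "cluster_labels M \<Sigma> x = label M \<Sigma> ` {z. same_cluster M x z}"

locale bimodel =
  fixes M :: "'w bimodel"
  assumes is_bimodel: "is_bimodel M"
begin

abbreviation preceq (infix "\<preccurlyeq>" 50) where "x \<preccurlyeq> y \<equiv> (x, y) \<in> leq M"
abbreviation prec (infix "\<prec>" 50) where "x \<prec> y \<equiv> strict M x y"

lemma leq_in_W: "x \<preccurlyeq> y \<Longrightarrow> x \<in> W M \<and> y \<in> W M"
  using is_bimodel unfolding is_bimodel_def by blast

lemma leq_refl: "x \<in> W M \<Longrightarrow> x \<preccurlyeq> x"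
  using is_bimodel unfolding is_bimodel_def refl_on_def by blast

lemma leq_trans: "x \<preccurlyeq> y \<Longrightarrow> y \<preccurlyeq> z \<Longrightarrow> x \<preccurlyeq> z"
  using is_bimodel unfolding is_bimodel_def trans_def by blast

lemma sq_refl: "x \<in> W M \<Longrightarrow> (x, x) \<in> sq M"
  using is_bimodel unfolding is_bimodel_def refl_on_def by blast

lemma strict_in_W: "x \<prec> y \<Longrightarrow> x \<in> W M \<and> y \<in> W M"
  unfolding strict_def using leq_in_W by blast

lemma strict_leq_trans: "x \<prec> y \<Longrightarrow> y \<preccurlyeq> z \<Longrightarrow> x \<prec> z"
  unfolding strict_def using leq_trans by blast

lemma leq_strict_trans: "x \<preccurlyeq> y \<Longrightarrow> y \<prec> z \<Longrightarrow> x \<prec> z"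
  unfolding strict_def using leq_trans by blast

lemma same_cluster_refl: "x \<in> W M \<Longrightarrow> same_cluster M x x"
  unfolding same_cluster_def using leq_refl by blast

lemma same_cluster_sym: "same_cluster M x y \<Longrightarrow> same_cluster M y x"
  unfolding same_cluster_def by blast

lemma same_cluster_trans: "same_cluster M x y \<Longrightarrow> same_cluster M y z \<Longrightarrow> same_cluster M x z"
  unfolding same_cluster_def using leq_trans by blast

lemma same_cluster_in_W: "same_cluster M x y \<Longrightarrow> x \<in> W M \<and> y \<in> W M"
  unfolding same_cluster_def using leq_in_W by blast

lemma covered_by_strict: "covered_by M x z \<Longrightarrow> x \<prec> z"
  unfolding covered_by_def by blast

lemma covered_by_in_W: "covered_by M x z \<Longrightarrow> x \<in> W M \<and> z \<in> W M"
  using covered_by_strict strict_in_W by blast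

lemma covered_by_same_cluster_left:
  "same_cluster M x x' \<Longrightarrow> covered_by M x z \<Longrightarrow> covered_by M x' z"
  unfolding covered_by_def same_cluster_def using leq_strict_trans by blast

lemma covered_by_same_cluster_right:
  "same_cluster M z z' \<Longrightarrow> covered_by M x z \<Longrightarrow> covered_by M x z'"
  unfolding covered_by_def same_cluster_def using strict_leq_trans by blast

end

locale finite_height_bimodel = bimodel +
  fixes n :: nat
  assumes model_height_le: "model_height M \<le> enat n"
begin

lemma has_chain_le: "has_chain M x k \<Longrightarrow> k \<le> n"
proof -
  assume chain: "has_chain M x k"
  then have "x \<in> W M"
    unfolding has_chain_def by force
  then have "enat k \<le> model_height M"
    using chain Sup_upper[of "enat k" "enat ` {k. has_chain M x k}"]
      Sup_upper[of "world_height M x" "world_height M ` W M"]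
    unfolding model_height_def world_height_def by force
  then have "enat k \<le> enat n"
    using model_height_le by (rule order_trans)
  then show "k \<le> n"
    by simp
qed

lemma has_chain_0: "x \<in> W M \<Longrightarrow> has_chain M x 0"
  unfolding has_chain_def by auto

lemma has_chain_Suc:
  assumes "x \<prec> y" and "has_chain M y k"
  shows "has_chain M x (Suc k)"
proof -
  obtain f where f: "f 0 = y" "\<forall>i\<le>k. f i \<in> W M" "\<forall>i<k. f i \<prec> f (Suc i)"
    using assms(2) unfolding has_chain_def by blast
  let ?g = "\<lambda>i. if i = 0 then x else f (i - 1)"
  have "\<forall>i\<le>Suc k. ?g i \<in> W M"
    using f strict_in_W[OF assms(1)] by auto
  moreover have "\<forall>i<Suc k. ?g i \<prec> ?g (Suc i)"
    using f assms(1) by (auto simp: less_Suc_eq_0_disj)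
  ultimately show ?thesis
    unfolding has_chain_def by (intro exI[of _ ?g]) simp
qed

definition height where
  "height x = Max {k. has_chain M x k}"

lemma
  assumes "x \<in> W M"
  shows has_chain_height: "has_chain M x (height x)"
    and le_height: "has_chain M x k \<Longrightarrow> k \<le> height x"
proof -
  have "finite {k. has_chain M x k}"
    using has_chain_le by (meson finite_nat_set_iff_bounded_le mem_Collect_eq)
  moreover have "{k. has_chain M x k} \<noteq> {}"
    using has_chain_0[OF assms] by blast
  ultimately show "has_chain M x (height x)" "has_chain M x k \<Longrightarrow> k \<le> height x"
    unfolding height_def using Max_in by auto
qed

lemma height_le: "x \<in> W M \<Longrightarrow> height x \<le> n"
  using has_chain_height has_chain_le by blast

lemma height_strict_less: "x \<prec> y \<Longrightarrow> height y < height x"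
  using has_chain_Suc has_chain_height le_height strict_in_W by (metis Suc_le_eq)

lemma exists_cover_le: "x \<prec> u \<Longrightarrow> \<exists>z. covered_by M x z \<and> z \<preccurlyeq> u"
proof (induction "n - height u" arbitrary: u rule: less_induct)
  case less
  show ?case
  proof (cases "covered_by M x u")
    case False
    then obtain y where y: "x \<prec> y" "y \<prec> u"
      using less.prems unfolding covered_by_def by blast
    have "height u < height y" "height y \<le> n"
      using height_strict_less[OF y(2)] height_le strict_in_W[OF y(1)] by auto
    then have "n - height y < n - height u"
      by arith
    then obtain z where "covered_by M x z" "z \<preccurlyeq> y"
      using less.hyps[of y] y(1) by blast
    then show ?thesis
      using y(2) leq_trans unfolding strict_def by blast
  qed (use less.prems leq_refl strict_in_W in blast)
qed

lemma exists_covered_ge: "p \<prec> x \<Longrightarrow> \<exists>q. covered_by M q x \<and> p \<preccurlyeq> q"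
proof (induction "height p" arbitrary: p rule: less_induct)
  case less
  show ?case
  proof (cases "covered_by M p x")
    case False
    then obtain y where y: "p \<prec> y" "y \<prec> x"
      using less.prems unfolding covered_by_def by blast
    then obtain q where "covered_by M q x" "y \<preccurlyeq> q"
      using less.hyps[of y] height_strict_less by blast
    then show ?thesis
      using y(1) leq_trans unfolding strict_def by blast
  qed (use less.prems leq_refl strict_in_W in blast)
qed

end

locale forest_bimodel = bimodel +
  assumes forest_like: "forest_like M"
begin

lemma covered_by_leq_cases:
  assumes "covered_by M p x" and "q \<preccurlyeq> x"
  shows "q \<preccurlyeq> p \<or> same_cluster M q x"
proof -
  have "p \<preccurlyeq> x" "p \<in> W M" "x \<in> W M" "q \<in> W M"
    using assms covered_by_strict leq_in_W unfolding strict_def by blast+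
  then have "q \<preccurlyeq> p \<or> p \<preccurlyeq> q"
    using forest_like assms(2) unfolding forest_like_def by blast
  moreover have "same_cluster M q x" if "p \<prec> q"
  proof -
    have "\<not> q \<prec> x"
      using that assms(1) unfolding covered_by_def by blast
    then show ?thesis
      using assms(2) unfolding same_cluster_def strict_def by blast
  qed
  ultimately show ?thesis
    unfolding strict_def by blast
qed

lemma covered_by_unique:
  assumes "covered_by M p x" and "covered_by M q x"
  shows "same_cluster M p q"
  using covered_by_leq_cases[OF assms(1)] covered_by_leq_cases[OF assms(2)] assms
    covered_by_strict
  unfolding same_cluster_def strict_def by blast

end

locale finite_height_forest_bimodel = finite_height_bimodel + forest_bimodel

section \<open>Up- and updown-equivalence\<close>

coinductive up_equiv :: "'w bimodel \<Rightarrow> fm set \<Rightarrow> 'w \<Rightarrow> 'w \<Rightarrow> bool" for M \<Sigma> where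
  "x \<in> W M \<Longrightarrow> y \<in> W M \<Longrightarrow> cluster_labels M \<Sigma> x = cluster_labels M \<Sigma> y \<Longrightarrow>
   \<forall>z \<in> {z. covered_by M x z}. \<exists>z' \<in> {z'. covered_by M y z'}. up_equiv M \<Sigma> z z' \<Longrightarrow>
   \<forall>z' \<in> {z'. covered_by M y z'}. \<exists>z \<in> {z. covered_by M x z}. up_equiv M \<Sigma> z z' \<Longrightarrow>
   up_equiv M \<Sigma> x y"

coinductive updown_equiv :: "'w bimodel \<Rightarrow> fm set \<Rightarrow> 'w \<Rightarrow> 'w \<Rightarrow> bool" for M \<Sigma> where
  "up_equiv M \<Sigma> x y \<Longrightarrow>
   \<forall>p \<in> {p. covered_by M p x}. \<exists>q \<in> {q. covered_by M q y}. updown_equiv M \<Sigma> p q \<Longrightarrow>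
   \<forall>q \<in> {q. covered_by M q y}. \<exists>p \<in> {p. covered_by M p x}. updown_equiv M \<Sigma> p q \<Longrightarrow>
   updown_equiv M \<Sigma> x y"

lemma up_equiv_in_W: "up_equiv M \<Sigma> x y \<Longrightarrow> x \<in> W M \<and> y \<in> W M"
  by (auto elim: up_equiv.cases)

lemma up_equiv_cluster_labels: "up_equiv M \<Sigma> x y \<Longrightarrow> cluster_labels M \<Sigma> x = cluster_labels M \<Sigma> y"
  by (auto elim: up_equiv.cases)

lemma up_equiv_covered_by:
  "up_equiv M \<Sigma> x y \<Longrightarrow> covered_by M x z \<Longrightarrow> \<exists>z'. covered_by M y z' \<and> up_equiv M \<Sigma> z z'"
  by (auto elim: up_equiv.cases)

lemma up_equiv_sym: "up_equiv M \<Sigma> x y \<Longrightarrow> up_equiv M \<Sigma> y x"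
  by (coinduction arbitrary: x y) (erule up_equiv.cases, metis)

lemma up_equiv_trans: "up_equiv M \<Sigma> x y \<Longrightarrow> up_equiv M \<Sigma> y z \<Longrightarrow> up_equiv M \<Sigma> x z"
  by (coinduction arbitrary: x y z) (erule up_equiv.cases, erule up_equiv.cases, metis)

lemma updown_equiv_up_equiv: "updown_equiv M \<Sigma> x y \<Longrightarrow> up_equiv M \<Sigma> x y"
  by (auto elim: updown_equiv.cases)

lemma updown_equiv_covers:
  "updown_equiv M \<Sigma> x y \<Longrightarrow> covered_by M p x \<Longrightarrow> \<exists>q. covered_by M q y \<and> updown_equiv M \<Sigma> p q"
  by (auto elim: updown_equiv.cases)

lemma updown_equiv_sym: "updown_equiv M \<Sigma> x y \<Longrightarrow> updown_equiv M \<Sigma> y x"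
  by (coinduction arbitrary: x y) (erule updown_equiv.cases, metis up_equiv_sym)

lemma updown_equiv_trans:
  "updown_equiv M \<Sigma> x y \<Longrightarrow> updown_equiv M \<Sigma> y z \<Longrightarrow> updown_equiv M \<Sigma> x z"
proof (coinduction arbitrary: x y z)
  case (updown_equiv a b c)
  show ?case
  proof (rule exI[of _ a], rule exI[of _ c], intro conjI refl ballI)
    show "up_equiv M \<Sigma> a c"
      using up_equiv_trans[OF updown_equiv_up_equiv[OF updown_equiv(1)]
          updown_equiv_up_equiv[OF updown_equiv(2)]] .
  next
    fix p assume "p \<in> {p. covered_by M p a}"
    then obtain q where q: "covered_by M q b" "updown_equiv M \<Sigma> p q"
      using updown_equiv_covers[OF updown_equiv(1)] by blast
    obtain r where "covered_by M r c" "updown_equiv M \<Sigma> q r"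
      using updown_equiv_covers[OF updown_equiv(2) q(1)] by blast
    then show "\<exists>r \<in> {r. covered_by M r c}.
      (\<exists>x y z. p = x \<and> r = z \<and> updown_equiv M \<Sigma> x y \<and> updown_equiv M \<Sigma> y z) \<or>
      updown_equiv M \<Sigma> p r"
      using q(2) by blast
  next
    fix r assume "r \<in> {r. covered_by M r c}"
    then obtain q where q: "covered_by M q b" "updown_equiv M \<Sigma> r q"
      using updown_equiv_covers[OF updown_equiv_sym[OF updown_equiv(2)]] by blast
    obtain p where "covered_by M p a" "updown_equiv M \<Sigma> q p"
      using updown_equiv_covers[OF updown_equiv_sym[OF updown_equiv(1)] q(1)] by blast
    then show "\<exists>p \<in> {p. covered_by M p a}.
      (\<exists>x y z. p = x \<and> r = z \<and> updown_equiv M \<Sigma> x y \<and> updown_equiv M \<Sigma> y z) \<or>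
      updown_equiv M \<Sigma> p r"
      using q(2) updown_equiv_sym[of M \<Sigma> q p] updown_equiv_sym[of M \<Sigma> r q] by blast
  qed
qed

context bimodel
begin

lemma cluster_labels_same_cluster:
  assumes "same_cluster M x y"
  shows "cluster_labels M \<Sigma> x = cluster_labels M \<Sigma> y"
proof -
  have "{z. same_cluster M x z} = {z. same_cluster M y z}"
    using assms same_cluster_trans same_cluster_sym by blast
  then show ?thesis
    unfolding cluster_labels_def by simp
qed

lemma up_equiv_same_cluster: "same_cluster M x y \<Longrightarrow> up_equiv M \<Sigma> x y"
proof (coinduction arbitrary: x y)
  case (up_equiv x y)
  show ?case
  proof (rule exI[of _ x], rule exI[of _ y], intro conjI refl ballI)
    show "x \<in> W M" "y \<in> W M"
      using same_cluster_in_W[OF up_equiv] by blast+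
    show "cluster_labels M \<Sigma> x = cluster_labels M \<Sigma> y"
      using cluster_labels_same_cluster[OF up_equiv] .
  next
    fix z assume "z \<in> {z. covered_by M x z}"
    then have "covered_by M y z" "same_cluster M z z"
      using covered_by_same_cluster_left[OF up_equiv] same_cluster_refl covered_by_in_W by blast+
    then show "\<exists>z' \<in> {z'. covered_by M y z'}.
      (\<exists>x y. z = x \<and> z' = y \<and> same_cluster M x y) \<or> up_equiv M \<Sigma> z z'"
      by blast
  next
    fix z assume "z \<in> {z. covered_by M y z}"
    then have "covered_by M x z" "same_cluster M z z"
      using covered_by_same_cluster_left[OF same_cluster_sym[OF up_equiv]] same_cluster_refl
        covered_by_in_W by blast+
    then show "\<exists>z' \<in> {z'. covered_by M x z'}.
      (\<exists>x y. z' = x \<and> z = y \<and> same_cluster M x y) \<or> up_equiv M \<Sigma> z' z"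
      by blast
  qed
qed

lemma updown_equiv_same_cluster: "same_cluster M x y \<Longrightarrow> updown_equiv M \<Sigma> x y"
proof (coinduction arbitrary: x y)
  case (updown_equiv x y)
  show ?case
  proof (rule exI[of _ x], rule exI[of _ y], intro conjI refl ballI)
    show "up_equiv M \<Sigma> x y"
      using up_equiv_same_cluster[OF updown_equiv] .
  next
    fix p assume "p \<in> {p. covered_by M p x}"
    then have "covered_by M p y" "same_cluster M p p"
      using covered_by_same_cluster_right[OF updown_equiv] same_cluster_refl covered_by_in_W
      by blast+
    then show "\<exists>q \<in> {q. covered_by M q y}.
      (\<exists>x y. p = x \<and> q = y \<and> same_cluster M x y) \<or> updown_equiv M \<Sigma> p q"
      by blast
  next
    fix p assume "p \<in> {p. covered_by M p y}"
    then have "covered_by M p x" "same_cluster M p p"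
      using covered_by_same_cluster_right[OF same_cluster_sym[OF updown_equiv]] same_cluster_refl
        covered_by_in_W by blast+
    then show "\<exists>q \<in> {q. covered_by M q x}.
      (\<exists>x y. q = x \<and> p = y \<and> same_cluster M x y) \<or> updown_equiv M \<Sigma> q p"
      by blast
  qed
qed

lemma updown_equiv_cluster_match:
  assumes "updown_equiv M \<Sigma> a b" and "same_cluster M a a'"
  shows "\<exists>b'. same_cluster M b b' \<and> updown_equiv M \<Sigma> a' b' \<and> label M \<Sigma> a' = label M \<Sigma> b'"
proof -
  have "label M \<Sigma> a' \<in> cluster_labels M \<Sigma> b"
    using up_equiv_cluster_labels[OF updown_equiv_up_equiv[OF assms(1)]] assms(2)
    unfolding cluster_labels_def by blast
  then obtain b' where b': "same_cluster M b b'" "label M \<Sigma> a' = label M \<Sigma> b'"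
    unfolding cluster_labels_def by auto
  have "updown_equiv M \<Sigma> a' b'"
    using updown_equiv_trans[OF updown_equiv_trans[OF
        updown_equiv_same_cluster[OF same_cluster_sym[OF assms(2)]] assms(1)]
      updown_equiv_same_cluster[OF b'(1)]] .
  then show ?thesis
    using b' by blast
qed

end

context forest_bimodel
begin

lemma updown_equiv_covers_if_up_equiv:
  assumes "updown_equiv M \<Sigma> w v" and "covered_by M w z" and "covered_by M v z'"
    and "up_equiv M \<Sigma> z z'"
  shows "updown_equiv M \<Sigma> z z'"
proof (rule updown_equiv.intros[OF assms(4)])
  have "updown_equiv M \<Sigma> p q" if "covered_by M p z" "covered_by M q z'" for p q
    using updown_equiv_trans[OF updown_equiv_trans[OF
        updown_equiv_same_cluster[OF covered_by_unique[OF that(1) assms(2)]] assms(1)]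
      updown_equiv_same_cluster[OF covered_by_unique[OF assms(3) that(2)]]] .
  then show "\<forall>p \<in> {p. covered_by M p z}. \<exists>q \<in> {q. covered_by M q z'}. updown_equiv M \<Sigma> p q"
    "\<forall>q \<in> {q. covered_by M q z'}. \<exists>p \<in> {p. covered_by M p z}. updown_equiv M \<Sigma> p q"
    using assms(2,3) by blast+
qed

end

context finite_height_forest_bimodel
begin

lemma updown_equiv_forward:
  "updown_equiv M \<Sigma> w v \<Longrightarrow> w \<preccurlyeq> w' \<Longrightarrow>
    \<exists>v'. v \<preccurlyeq> v' \<and> updown_equiv M \<Sigma> w' v' \<and> label M \<Sigma> w' = label M \<Sigma> v'"
proof (induction "height w" arbitrary: w v rule: less_induct)
  case less
  show ?case
  proof (cases "w' \<preccurlyeq> w")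
    case True
    then have "same_cluster M w w'"
      using less.prems(2) unfolding same_cluster_def by blast
    then obtain v' where "same_cluster M v v'" "updown_equiv M \<Sigma> w' v'"
      "label M \<Sigma> w' = label M \<Sigma> v'"
      using updown_equiv_cluster_match[OF less.prems(1)] by blast
    then show ?thesis
      unfolding same_cluster_def by blast
  next
    case False
    then have "w \<prec> w'"
      using less.prems(2) unfolding strict_def by blast
    then obtain z where z: "covered_by M w z" "z \<preccurlyeq> w'"
      using exists_cover_le by blast
    obtain z' where z': "covered_by M v z'" "up_equiv M \<Sigma> z z'"
      using up_equiv_covered_by[OF updown_equiv_up_equiv[OF less.prems(1)] z(1)] by blast
    have "updown_equiv M \<Sigma> z z'"
      using updown_equiv_covers_if_up_equiv[OF less.prems(1) z(1) z'] .
    moreover have "height z < height w"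
      using height_strict_less[OF covered_by_strict[OF z(1)]] .
    ultimately obtain v' where "z' \<preccurlyeq> v'" "updown_equiv M \<Sigma> w' v'"
      "label M \<Sigma> w' = label M \<Sigma> v'"
      using less.hyps z(2) by blast
    moreover have "v \<preccurlyeq> z'"
      using covered_by_strict[OF z'(1)] unfolding strict_def by blast
    ultimately show ?thesis
      using leq_trans by blast
  qed
qed

lemma updown_equiv_downward:
  "updown_equiv M \<Sigma> v v' \<Longrightarrow> w \<preccurlyeq> v \<Longrightarrow>
    \<exists>w'. w' \<preccurlyeq> v' \<and> updown_equiv M \<Sigma> w w' \<and> label M \<Sigma> w = label M \<Sigma> w'"
proof (induction "n - height v" arbitrary: v v' rule: less_induct)
  case less
  show ?case
  proof (cases "v \<preccurlyeq> w")
    case True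
    then have "same_cluster M v w"
      using less.prems(2) unfolding same_cluster_def by blast
    then obtain w' where "same_cluster M v' w'" "updown_equiv M \<Sigma> w w'"
      "label M \<Sigma> w = label M \<Sigma> w'"
      using updown_equiv_cluster_match[OF less.prems(1)] by blast
    then show ?thesis
      unfolding same_cluster_def by blast
  next
    case False
    then have "w \<prec> v"
      using less.prems(2) unfolding strict_def by blast
    then obtain q where q: "covered_by M q v" "w \<preccurlyeq> q"
      using exists_covered_ge by blast
    obtain q' where q': "covered_by M q' v'" "updown_equiv M \<Sigma> q q'"
      using updown_equiv_covers[OF less.prems(1) q(1)] by blast
    have "height v < height q" "height q \<le> n"
      using height_strict_less[OF covered_by_strict[OF q(1)]] height_le covered_by_in_W[OF q(1)]
      by blast+
    then have "n - height q < n - height v"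
      by arith
    then obtain w' where "w' \<preccurlyeq> q'" "updown_equiv M \<Sigma> w w'" "label M \<Sigma> w = label M \<Sigma> w'"
      using less.hyps q(2) q'(2) by blast
    moreover have "q' \<preccurlyeq> v'"
      using covered_by_strict[OF q'(1)] unfolding strict_def by blast
    ultimately show ?thesis
      using leq_trans by blast
  qed
qed

end

definition label_updown_equiv :: "'w bimodel \<Rightarrow> fm set \<Rightarrow> ('w \<times> 'w) set" where
  "label_updown_equiv M \<Sigma> = {(x, y). updown_equiv M \<Sigma> x y \<and> label M \<Sigma> x = label M \<Sigma> y}"

lemma (in finite_height_forest_bimodel) strong_bisimulation_label_updown_equiv:
  "strong_bisimulation M \<Sigma> (label_updown_equiv M \<Sigma>)"
  unfolding strong_bisimulation_def bisimulation_def forward_confluent_def backward_confluent_def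
    downward_confluent_def
proof (intro conjI allI impI)
  let ?E = "label_updown_equiv M \<Sigma>"
  have sym: "(x, y) \<in> ?E \<Longrightarrow> (y, x) \<in> ?E" for x y
    unfolding label_updown_equiv_def using updown_equiv_sym by fastforce
  show "?E \<subseteq> W M \<times> W M"
    unfolding label_updown_equiv_def by (auto dest: updown_equiv_up_equiv up_equiv_in_W)
  show "label M \<Sigma> w = label M \<Sigma> v" if "(w, v) \<in> ?E" for w v
    using that unfolding label_updown_equiv_def by blast
  show forward: "\<exists>v'. v \<preccurlyeq> v' \<and> (w', v') \<in> ?E" if "w \<preccurlyeq> w' \<and> (w, v) \<in> ?E" for w w' v
    using updown_equiv_forward that unfolding label_updown_equiv_def by fastforce
  show "\<exists>w'. w \<preccurlyeq> w' \<and> (w', v') \<in> ?E" if "(w, v) \<in> ?E \<and> v \<preccurlyeq> v'" for w v v'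
    using forward[of v v' w] that sym by blast
  show downward: "\<exists>w'. (w, w') \<in> ?E \<and> w' \<preccurlyeq> v'" if "w \<preccurlyeq> v \<and> (v, v') \<in> ?E" for w v v'
    using updown_equiv_downward that unfolding label_updown_equiv_def by fastforce
  show "\<exists>w'. (w, w') \<in> ?E\<inverse> \<and> w' \<preccurlyeq> v'" if "w \<preccurlyeq> v \<and> (v, v') \<in> ?E\<inverse>" for w v v'
    using downward[of w v v'] that sym by blast
qed

section \<open>Counting equivalence classes\<close>

definition up_class :: "'w bimodel \<Rightarrow> fm set \<Rightarrow> 'w \<Rightarrow> 'w set" where
  "up_class M \<Sigma> x = {y. up_equiv M \<Sigma> x y}"

definition updown_class :: "'w bimodel \<Rightarrow> fm set \<Rightarrow> 'w \<Rightarrow> 'w set" where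
  "updown_class M \<Sigma> x = {y. updown_equiv M \<Sigma> x y}"

definition succ_classes :: "'w bimodel \<Rightarrow> fm set \<Rightarrow> 'w \<Rightarrow> 'w set set" where
  "succ_classes M \<Sigma> x = up_class M \<Sigma> ` {z. covered_by M x z}"

definition pred_classes :: "'w bimodel \<Rightarrow> fm set \<Rightarrow> 'w \<Rightarrow> 'w set set" where
  "pred_classes M \<Sigma> x = updown_class M \<Sigma> ` {p. covered_by M p x}"

definition model_labels :: "'w bimodel \<Rightarrow> fm set \<Rightarrow> (fm set \<times> fm set) set" where
  "model_labels M \<Sigma> = label M \<Sigma> ` W M"

text \<open>Keeping a world's own label apart from the other labels of its cluster is what yields the
  factor \<open>p * 2 ^ (p - 1)\<close> rather than \<open>p * 2 ^ p\<close> in the final count.\<close>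

definition fingerprint ::
  "'w bimodel \<Rightarrow> fm set \<Rightarrow> 'w \<Rightarrow> ((fm set \<times> fm set) \<times> (fm set \<times> fm set) set) \<times> 'w set set \<times> 'w set set"
  where
  "fingerprint M \<Sigma> x = ((label M \<Sigma> x, cluster_labels M \<Sigma> x - {label M \<Sigma> x}),
     succ_classes M \<Sigma> x, pred_classes M \<Sigma> x)"

context bimodel
begin

lemma up_class_eq_iff:
  assumes "y \<in> W M"
  shows "up_class M \<Sigma> x = up_class M \<Sigma> y \<longleftrightarrow> up_equiv M \<Sigma> x y"
proof
  have "y \<in> up_class M \<Sigma> y"
    unfolding up_class_def using up_equiv_same_cluster[OF same_cluster_refl[OF assms]] by simp
  then show "up_class M \<Sigma> x = up_class M \<Sigma> y \<Longrightarrow> up_equiv M \<Sigma> x y"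
    unfolding up_class_def by (metis mem_Collect_eq)
next
  assume xy: "up_equiv M \<Sigma> x y"
  show "up_class M \<Sigma> x = up_class M \<Sigma> y"
    unfolding up_class_def
    by (auto intro: up_equiv_trans[OF xy] up_equiv_trans[OF up_equiv_sym[OF xy]])
qed

lemma updown_class_eq_iff:
  assumes "y \<in> W M"
  shows "updown_class M \<Sigma> x = updown_class M \<Sigma> y \<longleftrightarrow> updown_equiv M \<Sigma> x y"
proof
  have "y \<in> updown_class M \<Sigma> y"
    unfolding updown_class_def using updown_equiv_same_cluster[OF same_cluster_refl[OF assms]] by simp
  then show "updown_class M \<Sigma> x = updown_class M \<Sigma> y \<Longrightarrow> updown_equiv M \<Sigma> x y"
    unfolding updown_class_def by (metis mem_Collect_eq)
next
  assume xy: "updown_equiv M \<Sigma> x y"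
  show "updown_class M \<Sigma> x = updown_class M \<Sigma> y"
    unfolding updown_class_def
    by (auto intro: updown_equiv_trans[OF xy] updown_equiv_trans[OF updown_equiv_sym[OF xy]])
qed

lemma up_equiv_if_same_succ_classes:
  assumes "x \<in> W M" and "y \<in> W M" and "cluster_labels M \<Sigma> x = cluster_labels M \<Sigma> y"
    and "succ_classes M \<Sigma> x = succ_classes M \<Sigma> y"
  shows "up_equiv M \<Sigma> x y"
proof (rule up_equiv.intros[OF assms(1-3)])
  have match: "\<exists>z'. covered_by M y' z' \<and> up_equiv M \<Sigma> z z'"
    if z: "covered_by M x' z" and eq: "succ_classes M \<Sigma> x' = succ_classes M \<Sigma> y'" for x' y' z
  proof -
    obtain z' where z': "covered_by M y' z'" "up_class M \<Sigma> z = up_class M \<Sigma> z'"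
      using z eq unfolding succ_classes_def by blast
    then show ?thesis
      using up_class_eq_iff[of z' \<Sigma> z] covered_by_in_W[OF z'(1)] by blast
  qed
  show "\<forall>z \<in> {z. covered_by M x z}. \<exists>z' \<in> {z'. covered_by M y z'}. up_equiv M \<Sigma> z z'"
    using match assms(4) by blast
  show "\<forall>z' \<in> {z'. covered_by M y z'}. \<exists>z \<in> {z. covered_by M x z}. up_equiv M \<Sigma> z z'"
  proof
    fix z' assume "z' \<in> {z'. covered_by M y z'}"
    then obtain z where "covered_by M x z" "up_equiv M \<Sigma> z' z"
      using match[OF _ assms(4)[symmetric]] by blast
    then show "\<exists>z \<in> {z. covered_by M x z}. up_equiv M \<Sigma> z z'"
      using up_equiv_sym[of M \<Sigma> z' z] by blast
  qed
qed

lemma updown_equiv_if_same_pred_classes: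
  assumes "up_equiv M \<Sigma> x y" and "pred_classes M \<Sigma> x = pred_classes M \<Sigma> y"
  shows "updown_equiv M \<Sigma> x y"
proof (rule updown_equiv.intros[OF assms(1)])
  have match: "\<exists>q. covered_by M q y' \<and> updown_equiv M \<Sigma> p q"
    if p: "covered_by M p x'" and eq: "pred_classes M \<Sigma> x' = pred_classes M \<Sigma> y'" for x' y' p
  proof -
    obtain q where q: "covered_by M q y'" "updown_class M \<Sigma> p = updown_class M \<Sigma> q"
      using p eq unfolding pred_classes_def by blast
    then show ?thesis
      using updown_class_eq_iff[of q \<Sigma> p] covered_by_in_W[OF q(1)] by blast
  qed
  show "\<forall>p \<in> {p. covered_by M p x}. \<exists>q \<in> {q. covered_by M q y}. updown_equiv M \<Sigma> p q"
    using match assms(2) by blast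
  show "\<forall>q \<in> {q. covered_by M q y}. \<exists>p \<in> {p. covered_by M p x}. updown_equiv M \<Sigma> p q"
  proof
    fix q assume "q \<in> {q. covered_by M q y}"
    then obtain p where "covered_by M p x" "updown_equiv M \<Sigma> q p"
      using match[OF _ assms(2)[symmetric]] by blast
    then show "\<exists>p \<in> {p. covered_by M p x}. updown_equiv M \<Sigma> p q"
      using updown_equiv_sym[of M \<Sigma> q p] by blast
  qed
qed

lemma label_updown_equiv_if_fingerprint_eq:
  assumes "x \<in> W M" and "y \<in> W M" and "fingerprint M \<Sigma> x = fingerprint M \<Sigma> y"
  shows "(x, y) \<in> label_updown_equiv M \<Sigma>"
proof -
  have "label M \<Sigma> x \<in> cluster_labels M \<Sigma> x" "label M \<Sigma> y \<in> cluster_labels M \<Sigma> y"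
    using assms(1,2) same_cluster_refl unfolding cluster_labels_def by blast+
  then have "cluster_labels M \<Sigma> x = cluster_labels M \<Sigma> y"
    using assms(3) unfolding fingerprint_def by (metis insert_Diff prod.inject)
  then have "up_equiv M \<Sigma> x y"
    using up_equiv_if_same_succ_classes assms unfolding fingerprint_def by simp
  then have "updown_equiv M \<Sigma> x y"
    using updown_equiv_if_same_pred_classes assms(3) unfolding fingerprint_def by simp
  then show ?thesis
    using assms(3) unfolding label_updown_equiv_def fingerprint_def by simp
qed

lemma model_labels_subset:
  "model_labels M \<Sigma> \<subseteq> {(A, B). A \<subseteq> \<Sigma> \<and> B \<subseteq> \<Sigma> \<and> A \<inter> B = {}}"
proof
  fix c assume "c \<in> model_labels M \<Sigma>"
  then obtain x where "x \<in> W M" "c = label M \<Sigma> x"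
    unfolding model_labels_def by blast
  then show "c \<in> {(A, B). A \<subseteq> \<Sigma> \<and> B \<subseteq> \<Sigma> \<and> A \<inter> B = {}}"
    using sq_refl unfolding label_def label_pos_def label_dia_def by auto
qed

lemma
  assumes "finite \<Sigma>"
  shows finite_model_labels: "finite (model_labels M \<Sigma>)"
    and card_model_labels_le: "card (model_labels M \<Sigma>) \<le> 3 ^ card \<Sigma>"
proof -
  have "finite {(A, B). A \<subseteq> \<Sigma> \<and> B \<subseteq> \<Sigma> \<and> A \<inter> B = {}}"
    by (rule finite_subset[of _ "Pow \<Sigma> \<times> Pow \<Sigma>"]) (use assms in auto)
  then show "finite (model_labels M \<Sigma>)" "card (model_labels M \<Sigma>) \<le> 3 ^ card \<Sigma>"
    using finite_subset[OF model_labels_subset]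
      le_trans[OF card_mono[OF _ model_labels_subset] card_disjoint_subset_pairs_le[OF assms]]
    by blast+
qed

lemma cluster_labels_subset: "cluster_labels M \<Sigma> x \<subseteq> model_labels M \<Sigma>"
  unfolding cluster_labels_def model_labels_def using same_cluster_in_W by blast

end

lemma (in forest_bimodel) pred_classes_cases:
  "pred_classes M \<Sigma> x = {} \<or> (\<exists>p. covered_by M p x \<and> pred_classes M \<Sigma> x = {updown_class M \<Sigma> p})"
proof (cases "\<exists>p. covered_by M p x")
  case True
  then obtain p where p: "covered_by M p x"
    by blast
  have "updown_class M \<Sigma> q = updown_class M \<Sigma> p" if "covered_by M q x" for q
    using updown_class_eq_iff[of p \<Sigma> q] covered_by_in_W[OF p]
      updown_equiv_same_cluster[OF covered_by_unique[OF that p]] by blast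
  then have "pred_classes M \<Sigma> x = {updown_class M \<Sigma> p}"
    unfolding pred_classes_def using p by blast
  then show ?thesis
    using p by blast
qed (simp add: pred_classes_def)

context finite_height_forest_bimodel
begin

definition up_classes where
  "up_classes \<Sigma> k = up_class M \<Sigma> ` {z \<in> W M. height z < k}"

text \<open>\<open>n - height z\<close> plays the role of the depth of \<open>z\<close>: it strictly increases along covers,
  and \<open>n < height z + k\<close> says that it is below \<open>k\<close>.\<close>

definition updown_classes where
  "updown_classes \<Sigma> k = updown_class M \<Sigma> ` {z \<in> W M. n < height z + k}"

lemma up_classes_0 [simp]: "up_classes \<Sigma> 0 = {}"
  unfolding up_classes_def by simp

lemma updown_classes_0 [simp]: "updown_classes \<Sigma> 0 = {}"
  unfolding updown_classes_def using height_le by force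

lemma succ_classes_subset:
  assumes "x \<in> W M" and "height x \<le> k"
  shows "succ_classes M \<Sigma> x \<subseteq> up_classes \<Sigma> k"
proof
  fix c assume "c \<in> succ_classes M \<Sigma> x"
  then obtain z where z: "covered_by M x z" "c = up_class M \<Sigma> z"
    unfolding succ_classes_def by blast
  have "height z < k"
    using height_strict_less[OF covered_by_strict[OF z(1)]] assms(2) by simp
  then show "c \<in> up_classes \<Sigma> k"
    unfolding up_classes_def using z covered_by_in_W by blast
qed

lemma pred_classes_mem:
  assumes "x \<in> W M" and "n < height x + Suc k"
  shows "pred_classes M \<Sigma> x \<in> insert {} ((\<lambda>c. {c}) ` updown_classes \<Sigma> k)"
proof (cases "pred_classes M \<Sigma> x = {}")
  case False
  then obtain p where p: "covered_by M p x" "pred_classes M \<Sigma> x = {updown_class M \<Sigma> p}"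
    using pred_classes_cases by blast
  have "n < height p + k"
    using height_strict_less[OF covered_by_strict[OF p(1)]] assms(2) by simp
  then have "updown_class M \<Sigma> p \<in> updown_classes \<Sigma> k"
    unfolding updown_classes_def using covered_by_in_W[OF p(1)] by blast
  then show ?thesis
    using p(2) by blast
qed simp

lemma
  assumes "finite \<Sigma>" and "finite (up_classes \<Sigma> k)"
  shows finite_up_classes_Suc: "finite (up_classes \<Sigma> (Suc k))"
    and card_up_classes_Suc_le:
      "card (up_classes \<Sigma> (Suc k)) \<le> 2 ^ card (model_labels M \<Sigma>) * 2 ^ card (up_classes \<Sigma> k)"
proof -
  let ?A = "{z \<in> W M. height z < Suc k}"
  let ?h = "\<lambda>z. (cluster_labels M \<Sigma> z, succ_classes M \<Sigma> z)"
  let ?B = "Pow (model_labels M \<Sigma>) \<times> Pow (up_classes \<Sigma> k)"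
  have sub: "?h ` ?A \<subseteq> ?B"
  proof (rule image_subsetI)
    fix z assume "z \<in> ?A"
    then show "?h z \<in> ?B"
      using cluster_labels_subset succ_classes_subset[of z k \<Sigma>] by (simp add: less_Suc_eq_le)
  qed
  have fin: "finite ?B"
    using finite_model_labels assms by simp
  have "\<forall>x\<in>?A. \<forall>y\<in>?A. ?h x = ?h y \<longrightarrow> up_class M \<Sigma> x = up_class M \<Sigma> y"
    using up_class_eq_iff up_equiv_if_same_succ_classes by simp
  note classes = card_image_le_if_factors_through[OF finite_subset[OF sub fin] this]
  show "finite (up_classes \<Sigma> (Suc k))"
    unfolding up_classes_def by (rule classes(1))
  have "card (up_classes \<Sigma> (Suc k)) \<le> card ?B"
    using classes(2) card_mono[OF fin sub] unfolding up_classes_def by linarith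
  also have "\<dots> = 2 ^ card (model_labels M \<Sigma>) * 2 ^ card (up_classes \<Sigma> k)"
    using finite_model_labels assms by (simp add: card_cartesian_product card_Pow)
  finally show "card (up_classes \<Sigma> (Suc k)) \<le> \<dots>" .
qed

lemma finite_up_classes: "finite \<Sigma> \<Longrightarrow> finite (up_classes \<Sigma> k)"
  by (induction k) (simp_all add: finite_up_classes_Suc)

lemma
  assumes "finite \<Sigma>" and "finite (updown_classes \<Sigma> k)"
  shows finite_updown_classes_Suc: "finite (updown_classes \<Sigma> (Suc k))"
    and card_updown_classes_Suc_le:
      "card (updown_classes \<Sigma> (Suc k)) \<le> card (up_classes \<Sigma> (Suc n)) * (card (updown_classes \<Sigma> k) + 1)"
proof -
  let ?A = "{z \<in> W M. n < height z + Suc k}"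
  let ?h = "\<lambda>z. (up_class M \<Sigma> z, pred_classes M \<Sigma> z)"
  let ?T = "insert {} ((\<lambda>c. {c}) ` updown_classes \<Sigma> k)"
  let ?B = "up_classes \<Sigma> (Suc n) \<times> ?T"
  have sub: "?h ` ?A \<subseteq> ?B"
    using pred_classes_mem height_le unfolding up_classes_def by (auto simp: le_imp_less_Suc)
  have fin: "finite ?B"
    using finite_up_classes assms by simp
  have "\<forall>x\<in>?A. \<forall>y\<in>?A. ?h x = ?h y \<longrightarrow> updown_class M \<Sigma> x = updown_class M \<Sigma> y"
    using up_class_eq_iff updown_class_eq_iff updown_equiv_if_same_pred_classes by simp
  note classes = card_image_le_if_factors_through[OF finite_subset[OF sub fin] this]
  show "finite (updown_classes \<Sigma> (Suc k))"
    unfolding updown_classes_def by (rule classes(1))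
  have "card (updown_classes \<Sigma> (Suc k)) \<le> card ?B"
    using classes(2) card_mono[OF fin sub] unfolding updown_classes_def by linarith
  also have "\<dots> \<le> card (up_classes \<Sigma> (Suc n)) * (card (updown_classes \<Sigma> k) + 1)"
    unfolding card_cartesian_product
    using card_insert_empty_singletons_le[OF assms(2)] by (rule mult_le_mono2)
  finally show "card (updown_classes \<Sigma> (Suc k)) \<le> \<dots>" .
qed

lemma finite_updown_classes: "finite \<Sigma> \<Longrightarrow> finite (updown_classes \<Sigma> k)"
  by (induction k) (simp_all add: finite_updown_classes_Suc)

lemma
  assumes "finite \<Sigma>"
  shows finite_fingerprints: "finite (fingerprint M \<Sigma> ` W M)"
    and card_fingerprints_le: "card (fingerprint M \<Sigma> ` W M) \<le>
      card (model_labels M \<Sigma>) * 2 ^ (card (model_labels M \<Sigma>) - 1) *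
      2 ^ card (up_classes \<Sigma> n) * (card (updown_classes \<Sigma> n) + 1)"
proof -
  let ?L = "model_labels M \<Sigma>"
  let ?T = "insert {} ((\<lambda>c. {c}) ` updown_classes \<Sigma> n)"
  let ?B = "(SIGMA a:?L. Pow (?L - {a})) \<times> Pow (up_classes \<Sigma> n) \<times> ?T"
  have sub: "fingerprint M \<Sigma> ` W M \<subseteq> ?B"
  proof (rule image_subsetI)
    fix x assume x: "x \<in> W M"
    have "label M \<Sigma> x \<in> ?L"
      using x unfolding model_labels_def by blast
    then show "fingerprint M \<Sigma> x \<in> ?B"
      using cluster_labels_subset[of \<Sigma> x] succ_classes_subset[OF x height_le[OF x]]
        pred_classes_mem[OF x, of n] unfolding fingerprint_def by auto
  qed
  have fin: "finite ?B"
    using finite_model_labels finite_up_classes finite_updown_classes assms by simp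
  show "finite (fingerprint M \<Sigma> ` W M)"
    using finite_subset[OF sub fin] .
  have "card (fingerprint M \<Sigma> ` W M) \<le> card ?B"
    using card_mono[OF fin sub] .
  also have "\<dots> = card ?L * 2 ^ (card ?L - 1) * (2 ^ card (up_classes \<Sigma> n) * card ?T)"
    using card_Sigma_Pow_remove[OF finite_model_labels[OF assms]] finite_up_classes[OF assms]
    by (simp add: card_cartesian_product card_Pow)
  also have "\<dots> \<le> card ?L * 2 ^ (card ?L - 1) * (2 ^ card (up_classes \<Sigma> n) * (card (updown_classes \<Sigma> n) + 1))"
    using card_insert_empty_singletons_le[OF finite_updown_classes[OF assms]]
    by (intro mult_le_mono2) simp
  finally show "card (fingerprint M \<Sigma> ` W M) \<le>
      card ?L * 2 ^ (card ?L - 1) * 2 ^ card (up_classes \<Sigma> n) * (card (updown_classes \<Sigma> n) + 1)"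
    by (simp only: mult.assoc)
qed

end

theorem mainTheorem13:
  fixes M :: "'w bimodel" and \<Sigma> :: "fm set" and n s :: nat
  assumes "is_bimodel M"
    and "forest_like M"
    and "model_height M = enat n"
    and "finite \<Sigma>" and "card \<Sigma> = s"
  shows "finite (W M // approx M \<Sigma>) \<and>
         card (W M // approx M \<Sigma>) \<le> superexp (2 * (n + 1) * s) (n + 2)"
proof (cases "s = 0")
  case True
  then have "\<Sigma> = {}"
    using assms(4,5) by simp
  moreover have "1 \<le> superexp (2 * (n + 1) * s) (n + 2)"
    by simp
  ultimately show ?thesis
    using card_quotient_approx_no_formulas[OF assms(1)] by (simp del: superexp.simps)
next
  case False
  interpret finite_height_forest_bimodel M n
    using assms(1-3) by unfold_locales simp_all
  let ?p = "card (model_labels M \<Sigma>)"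
  have "card (fingerprint M \<Sigma> ` W M) \<le>
      ?p * 2 ^ (?p - 1) * 2 ^ card (up_classes \<Sigma> n) * (card (updown_classes \<Sigma> n) + 1)"
    by (rule card_fingerprints_le[OF assms(4)])
  also have "\<dots> \<le> superexp (2 * (n + 1) * s) (n + 2)"
    using False assms(4,5) card_model_labels_le card_up_classes_Suc_le card_updown_classes_Suc_le
      finite_up_classes finite_updown_classes
    by (intro count_le_superexp[where u = "\<lambda>k. card (up_classes \<Sigma> k)"]) auto
  finally have "card (fingerprint M \<Sigma> ` W M) \<le> superexp (2 * (n + 1) * s) (n + 2)" .
  moreover have "\<forall>x\<in>W M. \<forall>y\<in>W M.
      fingerprint M \<Sigma> x = fingerprint M \<Sigma> y \<longrightarrow> (x, y) \<in> label_updown_equiv M \<Sigma>"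
    using label_updown_equiv_if_fingerprint_eq by blast
  ultimately show ?thesis
    using card_quotient_approx_le[OF strong_bisimulation_label_updown_equiv
        finite_fingerprints[OF assms(4)]] by (meson le_trans)
qed

end
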